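(* Let $m>1$ and $n_1,\ldots,n_m>1$. Then the cone $\mathscr{P}_{\mathbb{C}}^{[n_1,\ldots,n_m]}$ is proper, while the cone $\mathscr{P}_{\mathbb{R}}^{[n_1,\ldots,n_m]}$ is solid but not pointed.
   Context: $\mathbb{C}^{[n_1,\ldots,n_m]}$ is the real vector space of tensors $\mathcal{H}\in\mathbb{C}^{n_1\times\cdots\times n_m\times n_1\times\cdots\times n_m}$ with $\mathcal{H}_{i_1\ldots i_m j_1\ldots j_m}=\overline{\mathcal{H}_{j_1\ldots j_m i_1\ldots i_m}}$; $\mathbb{R}^{[n_1,\ldots,n_m]}$ is its subset of real tensors. For $\mathbb{F}\in\{\mathbb{R},\mathbb{C}\}$, $\mathscr{P}_{\mathbb{F}}^{[n_1,\ldots,n_m]}:=\{\mathcal{H}\in\mathbb{F}^{[n_1,\ldots,n_m]}:\langle\mathcal{H},x_1\otimes\cdots\otimes x_m\otimes\overline{x_1}\otimes\cdots\otimes\overline{x_m}\rangle\ge0\ \forall x_i\in\mathbb{F}^{n_i}\}$, where $\langle\mathcal{A},\mathcal{B}\rangle=\sum\mathcal{A}_{\cdot}\overline{\mathcal{B}_{\cdot}}$. A closed convex cone in the real vector space $\mathbb{F}^{[n_1,\ldots,n_m]}$ is solid if it has nonempty interior, pointed if it contains no line through the origin, and proper if it is both. *)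

theory Defs
  imports Complex_Main
begin

text \<open>Dimensions are given by a list ns = [n_1,...,n_m] (so m = length ns).
  A tensor in C^{n_1 x ... x n_m x n_1 x ... x n_m} is represented as a function
  H :: nat list => nat list => complex, where H i j is the entry
  H_{i_1..i_m j_1..j_m}; entries outside the index range are required to be 0.
  A vector x_k in F^{n_k} is represented by x k :: nat => complex.\<close>

type_synonym tensor = "nat list \<Rightarrow> nat list \<Rightarrow> complex"

definition idx :: "nat list \<Rightarrow> nat list set" where
  "idx ns = {is. length is = length ns \<and> (\<forall>k<length ns. is ! k < ns ! k)}"

definition herm_C :: "nat list \<Rightarrow> tensor set" where
  "herm_C ns = {H. (\<forall>i j. (i \<notin> idx ns \<or> j \<notin> idx ns) \<longrightarrow> H i j = 0)
                 \<and> (\<forall>i j. H i j = cnj (H j i))}"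

definition herm_R :: "nat list \<Rightarrow> tensor set" where
  "herm_R ns = {H \<in> herm_C ns. \<forall>i j. H i j \<in> \<real>}"

definition tinner :: "nat list \<Rightarrow> tensor \<Rightarrow> tensor \<Rightarrow> complex" where
  "tinner ns A B = (\<Sum>i\<in>idx ns. \<Sum>j\<in>idx ns. A i j * cnj (B i j))"

definition rank1 :: "nat list \<Rightarrow> (nat \<Rightarrow> nat \<Rightarrow> complex) \<Rightarrow> tensor" where
  "rank1 ns x = (\<lambda>i j. if i \<in> idx ns \<and> j \<in> idx ns
      then (\<Prod>k<length ns. x k (i ! k)) * (\<Prod>k<length ns. cnj (x k (j ! k))) else 0)"

definition nonneg_c :: "complex \<Rightarrow> bool" where
  "nonneg_c z \<longleftrightarrow> Im z = 0 \<and> Re z \<ge> 0"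

definition PSD_C :: "nat list \<Rightarrow> tensor set" where
  "PSD_C ns = {H \<in> herm_C ns. \<forall>x. nonneg_c (tinner ns H (rank1 ns x))}"

definition PSD_R :: "nat list \<Rightarrow> tensor set" where
  "PSD_R ns = {H \<in> herm_R ns. \<forall>x. (\<forall>k l. x k l \<in> \<real>) \<longrightarrow> nonneg_c (tinner ns H (rank1 ns x))}"

text \<open>Cone notions relative to the ambient real vector space V (with entrywise topology
  on the finitely many coordinates).\<close>
definition closed_convex_cone :: "nat list \<Rightarrow> tensor set \<Rightarrow> tensor set \<Rightarrow> bool" where
  "closed_convex_cone ns V C \<longleftrightarrow> C \<subseteq> V \<and> C \<noteq> {}
     \<and> (\<forall>H\<in>C. \<forall>t::real. t \<ge> 0 \<longrightarrow> (\<lambda>i j. of_real t * H i j) \<in> C)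
     \<and> (\<forall>H\<in>C. \<forall>G\<in>C. \<forall>u::real. 0 \<le> u \<and> u \<le> 1 \<longrightarrow>
           (\<lambda>i j. of_real u * H i j + of_real (1 - u) * G i j) \<in> C)
     \<and> (\<forall>S H. (\<forall>k. S k \<in> C) \<and> H \<in> V \<and> (\<forall>i j. (\<lambda>k. S k i j) \<longlonglongrightarrow> H i j) \<longrightarrow> H \<in> C)"

definition solid_cone :: "nat list \<Rightarrow> tensor set \<Rightarrow> tensor set \<Rightarrow> bool" where
  "solid_cone ns V C \<longleftrightarrow> (\<exists>H\<in>C. \<exists>e>0. \<forall>G\<in>V.
      (\<forall>i\<in>idx ns. \<forall>j\<in>idx ns. cmod (G i j - H i j) < e) \<longrightarrow> G \<in> C)"

definition pointed_cone :: "tensor set \<Rightarrow> bool" where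
  "pointed_cone C \<longleftrightarrow> \<not> (\<exists>H. H \<noteq> (\<lambda>i j. 0) \<and> (\<forall>t::real. (\<lambda>i j. of_real t * H i j) \<in> C))"

definition proper_cone :: "nat list \<Rightarrow> tensor set \<Rightarrow> tensor set \<Rightarrow> bool" where
  "proper_cone ns V C \<longleftrightarrow> closed_convex_cone ns V C \<and> solid_cone ns V C \<and> pointed_cone C"

end

theory Submission
  imports Defs
begin

(* The pairing of H with x_1 (x) ... (x) x_m (x) conj x_1 (x) ... (x) conj x_m is the Hermitian
   form sum_{i,j} H_ij conj(x_i) x_j evaluated at the product coordinates x_i = prod_k x_k(i_k).
   Both cones are therefore cut out by closed half-spaces, hence closed convex cones.  The identity
   tensor is an interior point: its form is sum_i |x_i|^2, and perturbing every entry by less than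
   1/(N+1), N the number of multi-indices, changes the form by at most N/(N+1) times that.
   The complex cone is pointed because a form vanishing on all complex product vectors vanishes
   identically: polarization in the first factor reduces the claim to the remaining factors.
   Over the reals polarization is unavailable, and indeed for the 0/1 multi-indices e_K with
   support K one has x_(e_K) x_(e_L) = x_(e_(K Int L)) x_(e_(K Un L)).  So for K = {0}, L = {1}
   the real symmetric tensor E_ab + E_ba - E_cd - E_dc with a = e_K, b = e_L, c = e_(K Int L),
   d = e_(K Un L) has vanishing form on real product vectors, and spans a line in the real cone. *)

section \<open>Multi-indices\<close>

lemma idx_Nil: "idx [] = {[]}"
  by (auto simp: idx_def)

lemma Cons_in_idx_Cons: "a # i \<in> idx (n # ns) \<longleftrightarrow> a < n \<and> i \<in> idx ns"
  by (auto simp: idx_def less_Suc_eq_0_disj)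

lemma idx_Cons: "idx (n # ns) = (\<lambda>(a, i). a # i) ` ({..<n} \<times> idx ns)"
proof (rule set_eqI)
  fix xs
  show "xs \<in> idx (n # ns) \<longleftrightarrow> xs \<in> (\<lambda>(a, i). a # i) ` ({..<n} \<times> idx ns)"
    by (cases xs) (auto simp: Cons_in_idx_Cons, simp add: idx_def)
qed

lemma finite_idx: "finite (idx ns)"
  by (induction ns) (auto simp: idx_Nil idx_Cons)

lemma sum_idx_Cons: "(\<Sum>i\<in>idx (n # ns). f i) = (\<Sum>a<n. \<Sum>i\<in>idx ns. f (a # i))"
proof -
  have "inj_on (\<lambda>(a, i). a # i) ({..<n} \<times> idx ns)"
    by (auto simp: inj_on_def)
  then have "(\<Sum>i\<in>idx (n # ns). f i) = (\<Sum>(a, i)\<in>{..<n} \<times> idx ns. f (a # i))"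
    unfolding idx_Cons by (simp add: sum.reindex case_prod_beta')
  then show ?thesis
    by (simp add: sum.cartesian_product)
qed

section \<open>The Hermitian form of a tensor\<close>

definition tprod :: "nat list \<Rightarrow> (nat \<Rightarrow> nat \<Rightarrow> complex) \<Rightarrow> nat list \<Rightarrow> complex" where
  "tprod ns x i = (\<Prod>k<length ns. x k (i ! k))"

definition herm_form :: "nat list \<Rightarrow> tensor \<Rightarrow> (nat \<Rightarrow> nat \<Rightarrow> complex) \<Rightarrow> complex" where
  "herm_form ns H x = (\<Sum>i\<in>idx ns. \<Sum>j\<in>idx ns. H i j * cnj (tprod ns x i) * tprod ns x j)"

lemma tprod_Cons: "tprod (n # ns) x (a # i) = x 0 a * tprod ns (\<lambda>k. x (Suc k)) i"
  unfolding tprod_def length_Cons prod.lessThan_Suc_shift by simp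

lemma tinner_rank1: "tinner ns H (rank1 ns x) = herm_form ns H x"
  unfolding tinner_def rank1_def herm_form_def tprod_def
  by (intro sum.cong refl) (simp add: mult.assoc)

lemma herm_form_add:
  "herm_form ns (\<lambda>i j. A i j + B i j) x = herm_form ns A x + herm_form ns B x"
  by (simp add: herm_form_def sum.distrib ring_distribs)

lemma herm_form_diff:
  "herm_form ns (\<lambda>i j. A i j - B i j) x = herm_form ns A x - herm_form ns B x"
  by (simp add: herm_form_def sum_subtractf left_diff_distrib)

lemma herm_form_scale: "herm_form ns (\<lambda>i j. c * H i j) x = c * herm_form ns H x"
  by (simp add: herm_form_def sum_distrib_left mult.assoc)

lemma herm_form_Cons:
  "herm_form (n # ns) H x = (\<Sum>a<n. \<Sum>b<n. cnj (x 0 a) * x 0 b *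
     herm_form ns (\<lambda>i j. H (a # i) (b # j)) (\<lambda>k. x (Suc k)))"
proof -
  have "herm_form (n # ns) H x = (\<Sum>a<n. \<Sum>i\<in>idx ns. \<Sum>b<n. \<Sum>j\<in>idx ns.
      cnj (x 0 a) * x 0 b * (H (a # i) (b # j) * cnj (tprod ns (\<lambda>k. x (Suc k)) i)
        * tprod ns (\<lambda>k. x (Suc k)) j))"
    by (simp add: herm_form_def sum_idx_Cons tprod_Cons mult_ac)
  also have "\<dots> = (\<Sum>a<n. \<Sum>b<n. \<Sum>i\<in>idx ns. \<Sum>j\<in>idx ns.
      cnj (x 0 a) * x 0 b * (H (a # i) (b # j) * cnj (tprod ns (\<lambda>k. x (Suc k)) i)
        * tprod ns (\<lambda>k. x (Suc k)) j))"
    by (intro sum.cong refl) (rule sum.swap)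
  finally show ?thesis
    by (simp add: herm_form_def sum_distrib_left)
qed

lemma herm_C_iff:
  "H \<in> herm_C ns \<longleftrightarrow> (\<forall>i j. i \<notin> idx ns \<or> j \<notin> idx ns \<longrightarrow> H i j = 0)
     \<and> (\<forall>i j. cnj (H i j) = H j i)"
  unfolding herm_C_def mem_Collect_eq by (metis complex_cnj_cnj)

lemma herm_form_real:
  assumes "H \<in> herm_C ns"
  shows "herm_form ns H x \<in> \<real>"
proof -
  have "cnj (H i j) = H j i" for i j
    using assms by (simp add: herm_C_iff)
  then have "cnj (herm_form ns H x)
      = (\<Sum>i\<in>idx ns. \<Sum>j\<in>idx ns. H j i * cnj (tprod ns x j) * tprod ns x i)"
    by (simp add: herm_form_def mult_ac)
  also have "\<dots> = herm_form ns H x"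
    unfolding herm_form_def by (rule sum.swap)
  finally show ?thesis
    using Reals_cnj_iff by blast
qed

section \<open>Polarization\<close>

lemma sum_two_point_mult:
  fixes F :: "nat \<Rightarrow> 'a::comm_semiring_1"
  assumes "a < n" "b < n"
  shows "(\<Sum>l<n. ((if l = a then p else 0) + (if l = b then q else 0)) * F l) = p * F a + q * F b"
proof -
  have "(\<Sum>l<n. (if l = c then r else 0) * F l) = r * F c" if "c < n" for c r
  proof -
    have "(\<Sum>l<n. (if l = c then r else 0) * F l) = (\<Sum>l<n. if l = c then r * F c else 0)"
      by (rule sum.cong) auto
    then show ?thesis
      using that by simp
  qed
  then show ?thesis
    using assms by (simp add: distrib_right sum.distrib)
qed

lemma sesquilinear_form_at_two_points:
  fixes c :: "nat \<Rightarrow> nat \<Rightarrow> complex" and p q :: complex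
  assumes "a < n" "b < n"
  defines "u \<equiv> \<lambda>l. (if l = a then p else 0) + (if l = b then q else 0)"
  shows "(\<Sum>l<n. \<Sum>l'<n. cnj (u l) * u l' * c l l')
     = cnj p * p * c a a + cnj p * q * c a b + cnj q * p * c b a + cnj q * q * c b b"
proof -
  have cnj_u: "cnj (u l) = (if l = a then cnj p else 0) + (if l = b then cnj q else 0)" for l
    by (simp add: u_def)
  have "(\<Sum>l<n. \<Sum>l'<n. cnj (u l) * u l' * c l l') = (\<Sum>l<n. cnj (u l) * (\<Sum>l'<n. u l' * c l l'))"
    by (simp add: sum_distrib_left mult.assoc)
  also have "\<dots> = (\<Sum>l<n. ((if l = a then cnj p else 0) + (if l = b then cnj q else 0))
           * (\<Sum>l'<n. u l' * c l l'))"
    unfolding cnj_u ..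
  also have "\<dots> = cnj p * (p * c a a + q * c a b) + cnj q * (p * c b a + q * c b b)"
    using assms by (simp add: u_def sum_two_point_mult)
  finally show ?thesis
    by (simp add: algebra_simps)
qed

lemma sesquilinear_form_eq_0_imp_coeff_eq_0:
  fixes c :: "nat \<Rightarrow> nat \<Rightarrow> complex"
  assumes zero: "\<And>u. (\<Sum>l<n. \<Sum>l'<n. cnj (u l) * u l' * c l l') = 0"
    and "a < n" "b < n"
  shows "c a b = 0"
proof -
  have polar: "cnj p * p * c a a + cnj p * q * c a b + cnj q * p * c b a + cnj q * q * c b b = 0"
    for p q
    using zero[of "\<lambda>l. (if l = a then p else 0) + (if l = b then q else 0)"]
    by (simp only: sesquilinear_form_at_two_points[OF \<open>a < n\<close> \<open>b < n\<close>])
  have diag: "c a a = 0" "c b b = 0"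
    using polar[of 1 0] polar[of 0 1] by simp_all
  have "c a b + c b a = 0"
    using polar[of 1 1] diag by simp
  moreover have "\<i> * (c a b - c b a) = 0"
    using polar[of 1 \<i>] diag by (simp add: right_diff_distrib)
  ultimately show ?thesis
    by simp
qed

lemma herm_form_eq_0_imp_eq_0:
  "(\<And>x. herm_form ns H x = 0) \<Longrightarrow> i \<in> idx ns \<Longrightarrow> j \<in> idx ns \<Longrightarrow> H i j = 0"
proof (induction ns arbitrary: H i j)
  case Nil
  then show ?case
    by (simp add: herm_form_def idx_Nil tprod_def)
next
  case (Cons n ns)
  obtain a i' b j' where ij: "i = a # i'" "j = b # j'" and "a < n" "b < n"
    and "i' \<in> idx ns" "j' \<in> idx ns"
    using Cons.prems(2,3) unfolding idx_Cons by auto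
  have "herm_form ns (\<lambda>i j. H (a # i) (b # j)) y = 0" for y
  proof -
    define c where "c a b = herm_form ns (\<lambda>i j. H (a # i) (b # j)) y" for a b
    have "(\<Sum>l<n. \<Sum>l'<n. cnj (u l) * u l' * c l l') = 0" for u
      using Cons.prems(1)[of "\<lambda>k. case k of 0 \<Rightarrow> u | Suc k \<Rightarrow> y k"]
      by (simp add: herm_form_Cons c_def)
    from sesquilinear_form_eq_0_imp_coeff_eq_0[OF this \<open>a < n\<close> \<open>b < n\<close>] show ?thesis
      by (simp add: c_def)
  qed
  from Cons.IH[OF this \<open>i' \<in> idx ns\<close> \<open>j' \<in> idx ns\<close>] show ?case
    by (simp add: ij)
qed

section \<open>Closed convex cones of positive tensors\<close>

definition psd_on :: "nat list \<Rightarrow> tensor set \<Rightarrow> (nat \<Rightarrow> nat \<Rightarrow> complex) set \<Rightarrow> tensor set" where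
  "psd_on ns V X = {H \<in> V. \<forall>x\<in>X. nonneg_c (herm_form ns H x)}"

lemma PSD_C_eq_psd_on: "PSD_C ns = psd_on ns (herm_C ns) UNIV"
  by (simp add: PSD_C_def psd_on_def tinner_rank1)

lemma PSD_R_eq_psd_on: "PSD_R ns = psd_on ns (herm_R ns) {x. \<forall>k l. x k l \<in> \<real>}"
  by (simp add: PSD_R_def psd_on_def tinner_rank1)

lemma closed_nonneg_c: "closed {z. nonneg_c z}"
  unfolding nonneg_c_def
  by (intro closed_Collect_conj closed_Collect_eq closed_Collect_le continuous_intros)

lemma tendsto_herm_form:
  assumes "\<And>i j. (\<lambda>k. S k i j) \<longlonglongrightarrow> H i j"
  shows "(\<lambda>k. herm_form ns (S k) x) \<longlonglongrightarrow> herm_form ns H x"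
  unfolding herm_form_def by (intro tendsto_intros assms)

lemma closed_convex_cone_psd_on:
  assumes scale: "\<And>H t. H \<in> V \<Longrightarrow> (\<lambda>i j. of_real t * H i j) \<in> V"
    and add: "\<And>H G. H \<in> V \<Longrightarrow> G \<in> V \<Longrightarrow> (\<lambda>i j. H i j + G i j) \<in> V"
    and zero: "(\<lambda>i j. 0) \<in> V"
  shows "closed_convex_cone ns V (psd_on ns V X)"
  unfolding closed_convex_cone_def
proof (intro conjI ballI allI impI)
  show "psd_on ns V X \<subseteq> V"
    by (auto simp: psd_on_def)
  have "(\<lambda>i j. 0) \<in> psd_on ns V X"
    using zero by (simp add: psd_on_def herm_form_def nonneg_c_def)
  then show "psd_on ns V X \<noteq> {}"
    by blast
next
  fix H and t :: real
  assume "H \<in> psd_on ns V X" "0 \<le> t"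
  then show "(\<lambda>i j. of_real t * H i j) \<in> psd_on ns V X"
    by (auto simp: psd_on_def herm_form_scale scale nonneg_c_def)
next
  fix H G and u :: real
  assume H: "H \<in> psd_on ns V X" and G: "G \<in> psd_on ns V X" and u: "0 \<le> u \<and> u \<le> 1"
  have "(\<lambda>i j. of_real u * H i j + of_real (1 - u) * G i j) \<in> V"
    using H G by (intro add scale) (simp_all add: psd_on_def)
  moreover have "nonneg_c (herm_form ns (\<lambda>i j. of_real u * H i j + of_real (1 - u) * G i j) x)"
    if "x \<in> X" for x
  proof -
    have "nonneg_c (herm_form ns H x)" "nonneg_c (herm_form ns G x)"
      using H G that by (simp_all add: psd_on_def)
    moreover have "herm_form ns (\<lambda>i j. of_real u * H i j + of_real (1 - u) * G i j) x
        = of_real u * herm_form ns H x + of_real (1 - u) * herm_form ns G x"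
      by (simp only: herm_form_add herm_form_scale)
    ultimately show ?thesis
      using u by (simp add: nonneg_c_def)
  qed
  ultimately show "(\<lambda>i j. of_real u * H i j + of_real (1 - u) * G i j) \<in> psd_on ns V X"
    by (simp add: psd_on_def)
next
  fix S H
  assume "(\<forall>k. S k \<in> psd_on ns V X) \<and> H \<in> V \<and> (\<forall>i j. (\<lambda>k. S k i j) \<longlonglongrightarrow> H i j)"
  then have S: "\<And>k. S k \<in> psd_on ns V X" and "H \<in> V"
    and lim: "\<And>i j. (\<lambda>k. S k i j) \<longlonglongrightarrow> H i j"
    by blast+
  have "herm_form ns H x \<in> {z. nonneg_c z}" if "x \<in> X" for x
  proof (rule closed_sequentially[OF closed_nonneg_c _ tendsto_herm_form[OF lim]])
    show "herm_form ns (S k) x \<in> {z. nonneg_c z}" for k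
      using S[of k] that by (simp add: psd_on_def)
  qed
  with \<open>H \<in> V\<close> show "H \<in> psd_on ns V X"
    by (simp add: psd_on_def)
qed

lemma herm_C_scale: "H \<in> herm_C ns \<Longrightarrow> (\<lambda>i j. of_real t * H i j) \<in> herm_C ns"
  by (simp add: herm_C_iff)

lemma herm_C_add: "H \<in> herm_C ns \<Longrightarrow> G \<in> herm_C ns \<Longrightarrow> (\<lambda>i j. H i j + G i j) \<in> herm_C ns"
  by (simp add: herm_C_iff)

lemma zero_in_herm_C: "(\<lambda>i j. 0) \<in> herm_C ns"
  by (simp add: herm_C_iff)

lemma herm_R_scale: "H \<in> herm_R ns \<Longrightarrow> (\<lambda>i j. of_real t * H i j) \<in> herm_R ns"
  by (simp add: herm_R_def herm_C_scale)

lemma herm_R_add: "H \<in> herm_R ns \<Longrightarrow> G \<in> herm_R ns \<Longrightarrow> (\<lambda>i j. H i j + G i j) \<in> herm_R ns"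
  by (simp add: herm_R_def herm_C_add)

lemma zero_in_herm_R: "(\<lambda>i j. 0) \<in> herm_R ns"
  by (simp add: herm_R_def zero_in_herm_C)

section \<open>Solidity\<close>

definition id_tensor :: "nat list \<Rightarrow> tensor" where
  "id_tensor ns = (\<lambda>i j. if i \<in> idx ns \<and> j = i then 1 else 0)"

lemma id_tensor_in_herm_R: "id_tensor ns \<in> herm_R ns"
  by (auto simp: herm_R_def herm_C_iff id_tensor_def)

lemma herm_form_id_tensor:
  "herm_form ns (id_tensor ns) x = of_real (\<Sum>i\<in>idx ns. (cmod (tprod ns x i))\<^sup>2)"
proof -
  have "(\<Sum>j\<in>idx ns. id_tensor ns i j * cnj (tprod ns x i) * tprod ns x j)
      = cnj (tprod ns x i) * tprod ns x i" if "i \<in> idx ns" for i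
    using that finite_idx by (simp add: id_tensor_def if_distrib if_distribR cong: if_cong)
  then have "herm_form ns (id_tensor ns) x = (\<Sum>i\<in>idx ns. cnj (tprod ns x i) * tprod ns x i)"
    unfolding herm_form_def by (rule sum.cong[OF refl])
  then show ?thesis
    by (simp only: of_real_sum complex_norm_square mult.commute)
qed

lemma norm_herm_form_le:
  assumes D: "\<And>i j. i \<in> idx ns \<Longrightarrow> j \<in> idx ns \<Longrightarrow> cmod (D i j) \<le> e"
  shows "cmod (herm_form ns D x) \<le> e * card (idx ns) * (\<Sum>i\<in>idx ns. (cmod (tprod ns x i))\<^sup>2)"
proof -
  define a where "a i = cmod (tprod ns x i)" for i
  have "cmod (herm_form ns D x) \<le> (\<Sum>i\<in>idx ns. \<Sum>j\<in>idx ns. cmod (D i j) * (a i * a j))"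
    unfolding herm_form_def a_def
    by (rule order.trans[OF norm_sum sum_mono[OF order.trans[OF norm_sum eq_refl]]])
      (simp add: norm_mult mult.assoc)
  also have "\<dots> \<le> (\<Sum>i\<in>idx ns. \<Sum>j\<in>idx ns. e / 2 * (a i)\<^sup>2 + e / 2 * (a j)\<^sup>2)"
  proof (intro sum_mono)
    fix i j
    assume ij: "i \<in> idx ns" "j \<in> idx ns"
    have "0 \<le> e"
      using D[OF ij] norm_ge_zero order.trans by blast
    have "cmod (D i j) * (a i * a j) \<le> e * (a i * a j)"
      using D[OF ij] by (simp add: a_def mult_right_mono)
    also have "\<dots> \<le> e * (((a i)\<^sup>2 + (a j)\<^sup>2) / 2)"
      using \<open>0 \<le> e\<close> sum_squares_bound[of "a i" "a j"] by (intro mult_left_mono) simp_all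
    finally show "cmod (D i j) * (a i * a j) \<le> e / 2 * (a i)\<^sup>2 + e / 2 * (a j)\<^sup>2"
      by (simp add: field_simps)
  qed
  also have "\<dots> = (\<Sum>i\<in>idx ns. card (idx ns) * (e / 2 * (a i)\<^sup>2) + e / 2 * (\<Sum>j\<in>idx ns. (a j)\<^sup>2))"
    by (simp add: sum.distrib sum_distrib_left)
  also have "\<dots> = e * card (idx ns) * (\<Sum>i\<in>idx ns. (a i)\<^sup>2)"
    by (simp only: sum.distrib flip: sum_distrib_left) (simp add: algebra_simps)
  finally show ?thesis
    by (simp add: a_def)
qed

lemma nonneg_herm_form_near_id_tensor:
  assumes "G \<in> herm_C ns"
    and near: "\<forall>i\<in>idx ns. \<forall>j\<in>idx ns.
      cmod (G i j - id_tensor ns i j) < 1 / (real (card (idx ns)) + 1)"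
  shows "nonneg_c (herm_form ns G x)"
proof -
  define N where "N = real (card (idx ns))"
  define S where "S = (\<Sum>i\<in>idx ns. (cmod (tprod ns x i))\<^sup>2)"
  define D where "D i j = G i j - id_tensor ns i j" for i j
  have "cmod (D i j) \<le> 1 / (N + 1)" if "i \<in> idx ns" "j \<in> idx ns" for i j
    using near that unfolding D_def N_def by (meson less_imp_le)
  then have "cmod (herm_form ns D x) \<le> 1 / (N + 1) * N * S"
    unfolding N_def S_def by (rule norm_herm_form_le)
  also have "\<dots> \<le> S"
    by (simp add: N_def S_def field_simps sum_nonneg)
  finally have "cmod (herm_form ns D x) \<le> S" .
  moreover have "herm_form ns G x = of_real S + herm_form ns D x"
    using herm_form_add[of ns "id_tensor ns" D x] by (simp add: D_def S_def herm_form_id_tensor)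
  ultimately have "0 \<le> Re (herm_form ns G x)"
    using abs_Re_le_cmod[of "herm_form ns D x"] by simp
  with herm_form_real[OF \<open>G \<in> herm_C ns\<close>] show ?thesis
    by (simp add: nonneg_c_def complex_is_Real_iff)
qed

lemma solid_cone_psd_on:
  assumes "id_tensor ns \<in> V" and "V \<subseteq> herm_C ns"
  shows "solid_cone ns V (psd_on ns V X)"
  unfolding solid_cone_def
proof (intro bexI exI conjI ballI impI)
  show "(0::real) < 1 / (real (card (idx ns)) + 1)"
    by simp
  show "G \<in> psd_on ns V X"
    if "G \<in> V" and "\<forall>i\<in>idx ns. \<forall>j\<in>idx ns.
      cmod (G i j - id_tensor ns i j) < 1 / (real (card (idx ns)) + 1)"
    for G
    using that assms(2) nonneg_herm_form_near_id_tensor by (auto simp: psd_on_def)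
  show "id_tensor ns \<in> psd_on ns V X"
    using assms nonneg_herm_form_near_id_tensor[of "id_tensor ns"] by (auto simp: psd_on_def)
qed

section \<open>Pointedness\<close>

lemma pointed_PSD_C: "pointed_cone (PSD_C ns)"
  unfolding pointed_cone_def
proof
  assume "\<exists>H. H \<noteq> (\<lambda>i j. 0) \<and> (\<forall>t::real. (\<lambda>i j. of_real t * H i j) \<in> PSD_C ns)"
  then obtain H where "H \<noteq> (\<lambda>i j. 0)" and line: "\<And>t::real. (\<lambda>i j. of_real t * H i j) \<in> PSD_C ns"
    by blast
  have "H \<in> herm_C ns"
    using line[of 1] by (simp add: PSD_C_def)
  have nonneg: "nonneg_c (of_real t * herm_form ns H x)" for t x
    using line[of t] by (simp add: PSD_C_eq_psd_on psd_on_def herm_form_scale)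
  have "herm_form ns H x = 0" for x
    using nonneg[of 1 x] nonneg[of "-1" x] by (simp add: nonneg_c_def complex_eq_iff)
  then have "H i j = 0" for i j
    using herm_form_eq_0_imp_eq_0 \<open>H \<in> herm_C ns\<close> by (metis herm_C_iff)
  with \<open>H \<noteq> (\<lambda>i j. 0)\<close> show False
    by blast
qed

definition unit_tensor :: "nat list \<Rightarrow> nat list \<Rightarrow> tensor" where
  "unit_tensor p q = (\<lambda>i j. of_bool (i = p \<and> j = q))"

lemma unit_tensor_eq_0:
  "p \<in> idx ns \<Longrightarrow> q \<in> idx ns \<Longrightarrow> i \<notin> idx ns \<or> j \<notin> idx ns \<Longrightarrow> unit_tensor p q i j = 0"
  by (auto simp: unit_tensor_def)

lemma cnj_unit_tensor: "cnj (unit_tensor p q i j) = unit_tensor q p j i"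
  by (simp add: unit_tensor_def conj_commute)

lemma unit_tensor_real: "unit_tensor p q i j \<in> \<real>"
  by (simp add: unit_tensor_def)

lemma herm_form_unit_tensor:
  assumes "p \<in> idx ns" "q \<in> idx ns"
  shows "herm_form ns (unit_tensor p q) x = cnj (tprod ns x p) * tprod ns x q"
proof -
  have "(\<Sum>j\<in>idx ns. unit_tensor p q i j * cnj (tprod ns x i) * tprod ns x j)
      = (if i = p then cnj (tprod ns x p) * tprod ns x q else 0)" for i
    using assms finite_idx
    by (simp add: unit_tensor_def of_bool_def if_distrib if_distribR cong: if_cong)
  then show ?thesis
    using assms finite_idx by (simp add: herm_form_def)
qed

definition bin_index :: "nat list \<Rightarrow> nat set \<Rightarrow> nat list" where
  "bin_index ns K = map (\<lambda>k. of_bool (k \<in> K)) [0..<length ns]"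

lemma nth_bin_index: "k < length ns \<Longrightarrow> bin_index ns K ! k = of_bool (k \<in> K)"
  by (simp add: bin_index_def)

lemma bin_index_in_idx: "\<forall>k<length ns. 1 < ns ! k \<Longrightarrow> bin_index ns K \<in> idx ns"
  by (auto simp: idx_def bin_index_def intro: le_less_trans)

lemma tprod_bin_index_Int_Un:
  "tprod ns x (bin_index ns K) * tprod ns x (bin_index ns L)
     = tprod ns x (bin_index ns (K \<inter> L)) * tprod ns x (bin_index ns (K \<union> L))"
  unfolding tprod_def prod.distrib[symmetric]
  by (intro prod.cong refl) (auto simp: nth_bin_index mult.commute)

lemma cnj_tprod_real: "(\<And>k l. x k l \<in> \<real>) \<Longrightarrow> cnj (tprod ns x i) = tprod ns x i"
  by (simp add: tprod_def Reals_cnj_iff)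

definition exchange_tensor :: "nat list \<Rightarrow> nat list \<Rightarrow> nat list \<Rightarrow> nat list \<Rightarrow> tensor" where
  "exchange_tensor p q r s =
     (\<lambda>i j. unit_tensor p q i j + unit_tensor q p i j - unit_tensor r s i j - unit_tensor s r i j)"

lemma exchange_tensor_in_herm_R:
  assumes "p \<in> idx ns" "q \<in> idx ns" "r \<in> idx ns" "s \<in> idx ns"
  shows "exchange_tensor p q r s \<in> herm_R ns"
  unfolding herm_R_def herm_C_iff mem_Collect_eq
proof (intro conjI allI impI)
  fix i j
  show "exchange_tensor p q r s i j = 0" if "i \<notin> idx ns \<or> j \<notin> idx ns"
    using that assms by (simp add: exchange_tensor_def unit_tensor_eq_0)
  show "cnj (exchange_tensor p q r s i j) = exchange_tensor p q r s j i"
    "exchange_tensor p q r s i j \<in> \<real>"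
    by (simp_all add: exchange_tensor_def cnj_unit_tensor unit_tensor_real)
qed

lemma herm_form_exchange_tensor_real:
  assumes "p \<in> idx ns" "q \<in> idx ns" "r \<in> idx ns" "s \<in> idx ns" and "\<forall>k l. x k l \<in> \<real>"
  shows "herm_form ns (exchange_tensor p q r s) x
    = 2 * (tprod ns x p * tprod ns x q - tprod ns x r * tprod ns x s)"
  using assms by (simp add: exchange_tensor_def herm_form_add herm_form_diff herm_form_unit_tensor
      cnj_tprod_real algebra_simps)

lemma not_pointed_PSD_R_if_null_tensor:
  assumes "H \<in> herm_R ns" "H \<noteq> (\<lambda>i j. 0)" and "\<And>x. \<forall>k l. x k l \<in> \<real> \<Longrightarrow> herm_form ns H x = 0"
  shows "\<not> pointed_cone (PSD_R ns)"
proof -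
  have "(\<lambda>i j. of_real t * H i j) \<in> PSD_R ns" for t
    using assms herm_R_scale[OF \<open>H \<in> herm_R ns\<close>]
    by (simp add: PSD_R_eq_psd_on psd_on_def herm_form_scale nonneg_c_def)
  with \<open>H \<noteq> (\<lambda>i j. 0)\<close> show ?thesis
    unfolding pointed_cone_def by blast
qed

lemma not_pointed_PSD_R:
  assumes "length ns > 1" and "\<forall>k<length ns. ns ! k > 1"
  shows "\<not> pointed_cone (PSD_R ns)"
proof -
  define a b c d
    where "a = bin_index ns {0}" and "b = bin_index ns {1}"
      and "c = bin_index ns {}" and "d = bin_index ns {0, 1}"
  have idx: "a \<in> idx ns" "b \<in> idx ns" "c \<in> idx ns" "d \<in> idx ns"
    using bin_index_in_idx[OF assms(2)] by (simp_all add: a_def b_def c_def d_def)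
  have "a ! 0 = 1" "b ! 0 = 0" "c ! 0 = 0" "a ! 1 = 0" "d ! 1 = 1"
    using assms(1) less_trans[OF zero_less_one assms(1)]
    by (simp_all add: a_def b_def c_def d_def nth_bin_index)
  then have "a \<noteq> b" "a \<noteq> c" "a \<noteq> d"
    by auto
  then have "exchange_tensor a b c d a b = 1"
    by (simp add: exchange_tensor_def unit_tensor_def)
  moreover have "tprod ns x a * tprod ns x b = tprod ns x c * tprod ns x d" for x
    using tprod_bin_index_Int_Un[of ns x "{0}" "{1}"]
    by (simp add: a_def b_def c_def d_def insert_commute)
  ultimately show ?thesis
    using idx by (intro not_pointed_PSD_R_if_null_tensor[of "exchange_tensor a b c d"])
      (auto simp: exchange_tensor_in_herm_R herm_form_exchange_tensor_real)
qed

theorem proposition5p4: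
  fixes ns :: "nat list"
  assumes "length ns > 1"
    and "\<forall>k<length ns. ns ! k > 1"
  shows "proper_cone ns (herm_C ns) (PSD_C ns)
       \<and> closed_convex_cone ns (herm_R ns) (PSD_R ns)
       \<and> solid_cone ns (herm_R ns) (PSD_R ns)
       \<and> \<not> pointed_cone (PSD_R ns)"
proof -
  have "closed_convex_cone ns (herm_C ns) (PSD_C ns)"
    unfolding PSD_C_eq_psd_on
    by (rule closed_convex_cone_psd_on[OF herm_C_scale herm_C_add zero_in_herm_C])
  moreover have "closed_convex_cone ns (herm_R ns) (PSD_R ns)"
    unfolding PSD_R_eq_psd_on
    by (rule closed_convex_cone_psd_on[OF herm_R_scale herm_R_add zero_in_herm_R])
  moreover have "solid_cone ns (herm_C ns) (PSD_C ns)"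
    unfolding PSD_C_eq_psd_on
    by (rule solid_cone_psd_on) (use id_tensor_in_herm_R in \<open>auto simp: herm_R_def\<close>)
  moreover have "solid_cone ns (herm_R ns) (PSD_R ns)"
    unfolding PSD_R_eq_psd_on
    by (rule solid_cone_psd_on) (use id_tensor_in_herm_R in \<open>auto simp: herm_R_def\<close>)
  ultimately show ?thesis
    using pointed_PSD_C not_pointed_PSD_R[OF assms] by (simp add: proper_cone_def)
qed

end
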